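(* The short exact sequence $1\to\mathrm{Sym}(Z)\to\tilde QV\xrightarrow{\pi} V\to 1$ splits.
   Context: Let $\{0,1\}^*$ be the finite words over $\{0,1\}$, the vertices of the rooted binary tree in which $x$ has children $x0$ and $x1$ (two edge colours), and let $Z=\{0,1\}^*\cup\{\zeta\}$ with $\zeta$ an extra isolated vertex. $\tilde QV$ is the group of bijections $\tau$ of $Z$ with $\tau(x0)=\tau(x)0$ and $\tau(x1)=\tau(x)1$ for all but finitely many $x\in\{0,1\}^*$. Each such $\tau$ induces a homeomorphism $\pi(\tau)$ of $\{0,1\}^{\mathbb N}$ by $\pi(\tau)(\ell\omega)=\tau(\ell)\omega$, for $\ell$ in a finite maximal prefix-antichain $L$ with $\tau(\ell s)=\tau(\ell)s$ for all $\ell\in L$ and words $s$; this gives a surjective homomorphism $\pi$ onto Thompson's group $V$ whose kernel is $\mathrm{Sym}(Z)$, the group of finitely supported permutations of $Z$. *)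

theory Defs
  imports "HOL-Algebra.Group" "HOL-Library.Sublist"
begin

text \<open>Vertices of the rooted binary tree: finite words over bool (False = 0, True = 1);
  the children of x are x@[False] and x@[True].  Z = words plus an extra isolated vertex
  zeta, modelled as bool list option with None = zeta.\<close>

type_synonym vertex = "bool list"
type_synonym Zset = "bool list option"
type_synonym cantor = "nat \<Rightarrow> bool"

definition zeta :: Zset where "zeta = None"

definition respects_at :: "(Zset \<Rightarrow> Zset) \<Rightarrow> vertex \<Rightarrow> bool" where
  "respects_at \<tau> x \<longleftrightarrow> (\<exists>w. \<tau> (Some x) = Some w \<and>
      \<tau> (Some (x @ [False])) = Some (w @ [False]) \<and>
      \<tau> (Some (x @ [True])) = Some (w @ [True]))"

definition QVt_set :: "(Zset \<Rightarrow> Zset) set" where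
  "QVt_set = {\<tau>. bij \<tau> \<and> finite {x. \<not> respects_at \<tau> x}}"

definition QVt :: "(Zset \<Rightarrow> Zset) monoid" where
  "QVt = \<lparr>carrier = QVt_set, mult = (\<lambda>f g. f \<circ> g), one = id\<rparr>"

definition conc :: "bool list \<Rightarrow> cantor \<Rightarrow> cantor" where
  "conc w \<omega> = (\<lambda>i. if i < length w then w ! i else \<omega> (i - length w))"

definition pref :: "nat \<Rightarrow> cantor \<Rightarrow> bool list" where
  "pref n \<omega> = map \<omega> [0..<n]"

definition shift :: "nat \<Rightarrow> cantor \<Rightarrow> cantor" where
  "shift n \<omega> = (\<lambda>i. \<omega> (i + n))"

definition pi :: "(Zset \<Rightarrow> Zset) \<Rightarrow> cantor \<Rightarrow> cantor" where
  "pi \<tau> \<omega> = (THE \<eta>. \<exists>n w. \<tau> (Some (pref n \<omega>)) = Some w \<and>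
       (\<forall>s. \<tau> (Some (pref n \<omega> @ s)) = Some (w @ s)) \<and> \<eta> = conc w (shift n \<omega>))"

definition max_antichain :: "vertex set \<Rightarrow> bool" where
  "max_antichain L \<longleftrightarrow> finite L \<and>
     (\<forall>a\<in>L. \<forall>b\<in>L. prefix a b \<longrightarrow> a = b) \<and>
     (\<forall>x. \<exists>l\<in>L. prefix l x \<or> prefix x l)"

definition V_set :: "(cantor \<Rightarrow> cantor) set" where
  "V_set = {f. \<exists>L L' \<phi>. max_antichain L \<and> max_antichain L' \<and> bij_betw \<phi> L L' \<and>
      (\<forall>l\<in>L. \<forall>\<omega>. f (conc l \<omega>) = conc (\<phi> l) \<omega>)}"

definition V :: "(cantor \<Rightarrow> cantor) monoid" where
  "V = \<lparr>carrier = V_set, mult = (\<lambda>f g. f \<circ> g), one = id\<rparr>"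

end

theory Submission
  imports Defs
begin

text \<open>The sequences with only finitely many ones form a set which every element of V maps
  bijectively onto itself, and Z is in bijection with it via \<open>\<zeta> \<mapsto> 0\<^sup>\<infinity>\<close>,
  \<open>x \<mapsto> x10\<^sup>\<infinity>\<close>.  Transporting the action of V along this bijection gives a homomorphism
  from V to the permutations of Z.  An element acting by prefix replacement \<open>l \<mapsto> \<phi> l\<close>
  sends \<open>l t10\<^sup>\<infinity>\<close> to \<open>\<phi>(l) t10\<^sup>\<infinity>\<close>, so the transported permutation sends the word \<open>l t\<close> to \<open>\<phi>(l) t\<close>: it lies in
  \<open>QV\<close> and \<open>\<pi>\<close> recovers the original element.\<close>

lemma length_pref [simp]: "length (pref n \<omega>) = n"
  by (simp add: pref_def)

lemma pref_conc [simp]: "pref (length w) (conc w \<omega>) = w"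
proof -
  have "map (conc w \<omega>) [0..<length w] = map (nth w) [0..<length w]"
    by (rule map_cong) (auto simp: conc_def)
  then show ?thesis by (simp add: pref_def map_nth)
qed

lemma shift_conc [simp]: "shift (length w) (conc w \<omega>) = \<omega>"
  by (simp add: shift_def conc_def)

lemma conc_append: "conc (a @ b) \<omega> = conc a (conc b \<omega>)"
  by (auto simp: conc_def nth_append fun_eq_iff)

lemma conc_pref_shift: "conc (pref n \<omega>) (shift n \<omega>) = \<omega>"
  by (auto simp: conc_def pref_def shift_def fun_eq_iff)

lemma take_pref: "k \<le> n \<Longrightarrow> take k (pref n \<omega>) = pref k \<omega>"
  by (simp add: pref_def take_map)

lemma conc_drop_pref_shift: "n \<le> N \<Longrightarrow> conc (drop n (pref N \<omega>)) (shift N \<omega>) = shift n \<omega>"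
  by (auto simp: conc_def pref_def shift_def fun_eq_iff add.commute)

definition starts_with :: "bool list \<Rightarrow> cantor \<Rightarrow> bool" where
  "starts_with l \<omega> \<longleftrightarrow> pref (length l) \<omega> = l"

lemma starts_with_conc: "starts_with l (conc l \<omega>)"
  by (simp add: starts_with_def)

lemma starts_with_imp_conc_shift: "starts_with l \<omega> \<Longrightarrow> \<omega> = conc l (shift (length l) \<omega>)"
  unfolding starts_with_def using conc_pref_shift[of "length l" \<omega>] by simp

lemma starts_with_prefix_comparable:
  assumes "starts_with a \<omega>" "starts_with b \<omega>"
  shows "prefix a b \<or> prefix b a"
proof -
  have "u = take (length u) v" if "starts_with u \<omega>" "starts_with v \<omega>" "length u \<le> length v"
    for u v
    using that take_pref[OF that(3), of \<omega>] by (simp add: starts_with_def)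
  then show ?thesis using assms by (metis nle_le take_is_prefix)
qed

lemma max_antichain_starts_with_unique:
  assumes "max_antichain L" "a \<in> L" "b \<in> L" "starts_with a \<omega>" "starts_with b \<omega>"
  shows "a = b"
  using assms starts_with_prefix_comparable[OF assms(4,5)]
  unfolding max_antichain_def by blast

lemma max_antichain_prefix_of_long_word:
  assumes "max_antichain L" "Max (length ` L) \<le> length x"
  shows "\<exists>l\<in>L. prefix l x"
proof -
  obtain l where l: "l \<in> L" "prefix l x \<or> prefix x l"
    using assms(1) unfolding max_antichain_def by blast
  have "length l \<le> Max (length ` L)"
    using assms(1) l(1) by (intro Max_ge) (auto simp: max_antichain_def)
  then have "prefix x l \<Longrightarrow> x = l"
    using assms(2) prefix_length_less[of x l] by (auto simp: strict_prefix_def)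
  then show ?thesis using l by blast
qed

lemma max_antichain_starts_with_exists:
  assumes "max_antichain L"
  shows "\<exists>l\<in>L. starts_with l \<omega>"
proof -
  define N where "N = Max (length ` L)"
  obtain l where l: "l \<in> L" "prefix l (pref N \<omega>)"
    using max_antichain_prefix_of_long_word[OF assms, of "pref N \<omega>"] by (auto simp: N_def)
  then have "l = take (length l) (pref N \<omega>)" "length l \<le> N"
    using prefix_length_le[OF l(2)] by (auto simp: prefix_def)
  then have "starts_with l \<omega>"
    by (metis starts_with_def take_pref)
  then show ?thesis using l(1) by blast
qed

definition eventually_zero :: "cantor set" where
  "eventually_zero = {\<omega>. \<exists>n. \<forall>i\<ge>n. \<not> \<omega> i}"

lemma conc_eventually_zero: "\<omega> \<in> eventually_zero \<Longrightarrow> conc w \<omega> \<in> eventually_zero"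
proof -
  assume "\<omega> \<in> eventually_zero"
  then obtain n where "\<forall>i\<ge>n. \<not> \<omega> i" by (auto simp: eventually_zero_def)
  then have "\<forall>i\<ge>n + length w. \<not> conc w \<omega> i" by (simp add: conc_def)
  then show ?thesis by (auto simp: eventually_zero_def)
qed

lemma shift_eventually_zero: "\<omega> \<in> eventually_zero \<Longrightarrow> shift k \<omega> \<in> eventually_zero"
  unfolding eventually_zero_def shift_def by (auto intro: trans_le_add1)

definition encode :: "Zset \<Rightarrow> cantor" where
  "encode z = (case z of None \<Rightarrow> (\<lambda>_. False) | Some x \<Rightarrow> conc (x @ [True]) (\<lambda>_. False))"

lemma encode_Some_eq_iff: "encode (Some x) i \<longleftrightarrow> (i < length x \<and> x ! i) \<or> i = length x"
  by (auto simp: encode_def conc_def nth_append)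

lemma pref_encode_Some: "pref (length x) (encode (Some x)) = x"
  by (simp add: encode_def conc_append)

lemma encode_Some_last_one: "encode (Some x) (length x)" "length x < i \<Longrightarrow> \<not> encode (Some x) i"
  by (simp_all add: encode_Some_eq_iff)

lemma encode_Some_length_le:
  assumes "encode (Some x) = encode (Some y)"
  shows "length y \<le> length x"
proof (rule ccontr)
  assume "\<not> length y \<le> length x"
  then have "\<not> encode (Some x) (length y)" by (simp add: encode_Some_last_one)
  then show False using assms encode_Some_last_one(1)[of y] by simp
qed

lemma inj_encode: "inj encode"
proof (rule injI)
  have Some_inj: "x = y" if eq: "encode (Some x) = encode (Some y)" for x y
  proof -
    have "length x = length y"
      using encode_Some_length_le[OF eq] encode_Some_length_le[OF eq[symmetric]] by simp
    then have "x = pref (length y) (encode (Some y))"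
      using pref_encode_Some[of x] eq by simp
    then show ?thesis by (simp add: pref_encode_Some)
  qed
  have Some_ne_None: "encode (Some x) \<noteq> encode None" for x
    using encode_Some_last_one(1)[of x] by (auto simp: encode_def)
  fix a b assume "encode a = encode b"
  then show "a = b"
    using Some_ne_None Some_ne_None[symmetric] by (cases a; cases b) (auto dest: Some_inj)
qed

lemma range_encode: "range encode = eventually_zero"
proof
  show "range encode \<subseteq> eventually_zero"
  proof -
    have "(\<lambda>_. False) \<in> eventually_zero" by (simp add: eventually_zero_def)
    then show ?thesis by (auto simp: encode_def split: option.split intro: conc_eventually_zero)
  qed
  show "eventually_zero \<subseteq> range encode"
  proof
    fix \<omega> assume "\<omega> \<in> eventually_zero"
    then obtain n where "\<forall>i\<ge>n. \<not> \<omega> i" by (auto simp: eventually_zero_def)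
    then have "{i. \<omega> i} \<subseteq> {..<n}" by (auto simp: not_le[symmetric])
    then have fin: "finite {i. \<omega> i}" by (rule finite_subset) simp
    show "\<omega> \<in> range encode"
    proof (cases "\<exists>i. \<omega> i")
      case False
      then have "\<omega> = encode None" by (auto simp: encode_def)
      then show ?thesis by blast
    next
      case True
      define m where "m = Max {i. \<omega> i}"
      have "\<omega> m" "\<And>i. m < i \<Longrightarrow> \<not> \<omega> i"
        using fin True Max_in Max_ge by (fastforce simp: m_def)+
      then have "\<omega> = encode (Some (pref m \<omega>))"
        by (auto simp: fun_eq_iff encode_Some_eq_iff pref_def linorder_neq_iff)
      then show ?thesis by blast
    qed
  qed
qed

lemma bij_betw_encode: "bij_betw encode UNIV eventually_zero"
  using inj_encode range_encode by (simp add: bij_betw_def)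

definition transport :: "(cantor \<Rightarrow> cantor) \<Rightarrow> Zset \<Rightarrow> Zset" where
  "transport g = inv_into UNIV encode \<circ> g \<circ> encode"

locale prefix_replacement =
  fixes f :: "cantor \<Rightarrow> cantor" and L L' :: "vertex set" and \<phi> :: "vertex \<Rightarrow> vertex"
  assumes max_antichain_L: "max_antichain L" and max_antichain_L': "max_antichain L'"
    and bij_betw_\<phi>: "bij_betw \<phi> L L'"
    and replaces: "\<And>l \<omega>. l \<in> L \<Longrightarrow> f (conc l \<omega>) = conc (\<phi> l) \<omega>"
begin

lemma apply_starts_with:
  "l \<in> L \<Longrightarrow> starts_with l \<omega> \<Longrightarrow> f \<omega> = conc (\<phi> l) (shift (length l) \<omega>)"
  by (metis replaces starts_with_imp_conc_shift)

lemma inj: "inj f"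
proof (rule injI)
  fix a b assume eq: "f a = f b"
  obtain l where l: "l \<in> L" "starts_with l a"
    using max_antichain_starts_with_exists[OF max_antichain_L] by blast
  obtain k where k: "k \<in> L" "starts_with k b"
    using max_antichain_starts_with_exists[OF max_antichain_L] by blast
  have fa: "f a = conc (\<phi> l) (shift (length l) a)" and fb: "f b = conc (\<phi> k) (shift (length k) b)"
    using apply_starts_with l k by blast+
  have "starts_with (\<phi> l) (f a)"
    unfolding fa by (rule starts_with_conc)
  moreover have "starts_with (\<phi> k) (f a)"
    unfolding eq fb by (rule starts_with_conc)
  ultimately have "\<phi> l = \<phi> k"
    using max_antichain_starts_with_unique[OF max_antichain_L'] bij_betw_apply[OF bij_betw_\<phi>]
      l(1) k(1) by blast
  then have "l = k"
    using bij_betw_\<phi> l(1) k(1) by (auto simp: bij_betw_def inj_on_def)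
  moreover have "shift (length l) a = shift (length k) b"
    using fa fb eq \<open>\<phi> l = \<phi> k\<close> by (metis shift_conc)
  ultimately show "a = b"
    by (metis l(2) k(2) starts_with_imp_conc_shift)
qed

lemma bij_betw_eventually_zero: "bij_betw f eventually_zero eventually_zero"
proof (rule bij_betw_imageI)
  show "inj_on f eventually_zero" using inj by (rule inj_on_subset) simp
  show "f ` eventually_zero = eventually_zero"
  proof
    show "f ` eventually_zero \<subseteq> eventually_zero"
    proof clarify
      fix \<omega> assume "\<omega> \<in> eventually_zero"
      moreover obtain l where "l \<in> L" "starts_with l \<omega>"
        using max_antichain_starts_with_exists[OF max_antichain_L] by blast
      ultimately show "f \<omega> \<in> eventually_zero"
        by (simp add: apply_starts_with conc_eventually_zero shift_eventually_zero)
    qed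
    show "eventually_zero \<subseteq> f ` eventually_zero"
    proof
      fix \<eta> assume \<eta>: "\<eta> \<in> eventually_zero"
      obtain l' where l': "l' \<in> L'" "starts_with l' \<eta>"
        using max_antichain_starts_with_exists[OF max_antichain_L'] by blast
      then obtain l where l: "l \<in> L" "\<phi> l = l'"
        using bij_betw_\<phi> by (metis bij_betw_imp_surj_on imageE)
      have "conc l (shift (length l') \<eta>) \<in> eventually_zero"
        using \<eta> by (simp add: conc_eventually_zero shift_eventually_zero)
      moreover have "\<eta> = f (conc l (shift (length l') \<eta>))"
        unfolding replaces[OF l(1)] l(2) by (rule starts_with_imp_conc_shift[OF l'(2)])
      ultimately show "\<eta> \<in> f ` eventually_zero" by blast
    qed
  qed
qed

text \<open>The code of the word \<open>l t\<close> is \<open>l (t10\<^sup>\<infinity>)\<close>, on which \<open>f\<close> acts by replacing \<open>l\<close>.\<close>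
lemma transport_Some: "l \<in> L \<Longrightarrow> transport f (Some (l @ t)) = Some (\<phi> l @ t)"
proof -
  assume l: "l \<in> L"
  have "f (encode (Some (l @ t))) = conc (\<phi> l) (conc (t @ [True]) (\<lambda>_. False))"
    using replaces[OF l] by (simp add: encode_def conc_append)
  also have "\<dots> = encode (Some (\<phi> l @ t))"
    by (simp add: encode_def conc_append)
  finally show ?thesis
    by (simp add: transport_def inj_encode)
qed

lemma respects_at_transport: "l \<in> L \<Longrightarrow> respects_at (transport f) (l @ t)"
  by (simp add: respects_at_def transport_Some)

lemma transport_in_QVt: "transport f \<in> QVt_set"
proof -
  have "bij (transport f)"
    unfolding transport_def bij_def[symmetric]
    using bij_betw_trans[OF bij_betw_trans[OF bij_betw_encode bij_betw_eventually_zero]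
        bij_betw_inv_into[OF bij_betw_encode]]
    by (simp add: comp_assoc)
  moreover have "{x. \<not> respects_at (transport f) x} \<subseteq> {x. length x < Max (length ` L)}"
  proof (clarsimp, rule ccontr)
    fix x assume "\<not> respects_at (transport f) x" "\<not> length x < Max (length ` L)"
    moreover obtain l t where "l \<in> L" "x = l @ t"
      using max_antichain_prefix_of_long_word[OF max_antichain_L, of x] calculation(2)
      by (auto simp: prefix_def)
    ultimately show False
      using respects_at_transport by blast
  qed
  moreover have "finite {x :: vertex. length x < Max (length ` L)}"
    using finite_lists_length_le[of "UNIV :: bool set" "Max (length ` L)"]
    by (rule finite_subset[rotated]) auto
  ultimately show ?thesis
    by (auto simp: QVt_set_def intro: finite_subset)
qed

lemma pi_transport: "pi (transport f) = f"
proof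
  fix \<omega>
  obtain l where l: "l \<in> L" "starts_with l \<omega>"
    using max_antichain_starts_with_exists[OF max_antichain_L] by blast
  show "pi (transport f) \<omega> = f \<omega>"
    unfolding pi_def
  proof (rule the_equality)
    show "\<exists>n w. transport f (Some (pref n \<omega>)) = Some w \<and>
        (\<forall>s. transport f (Some (pref n \<omega> @ s)) = Some (w @ s)) \<and> f \<omega> = conc w (shift n \<omega>)"
      using l transport_Some[of l "[]"] transport_Some[of l] apply_starts_with
      unfolding starts_with_def by (intro exI[of _ "length l"] exI[of _ "\<phi> l"]) auto
  next
    fix \<eta> assume "\<exists>n w. transport f (Some (pref n \<omega>)) = Some w \<and>
        (\<forall>s. transport f (Some (pref n \<omega> @ s)) = Some (w @ s)) \<and> \<eta> = conc w (shift n \<omega>)"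
    then obtain n w where nw: "\<And>s. transport f (Some (pref n \<omega> @ s)) = Some (w @ s)"
      and \<eta>: "\<eta> = conc w (shift n \<omega>)" by blast
    txt \<open>Compare both descriptions of \<open>transport f\<close> on the common extension \<open>pref N \<omega>\<close>.\<close>
    define N where "N = n + length l"
    define s where "s = drop n (pref N \<omega>)"
    define t where "t = drop (length l) (pref N \<omega>)"
    have "pref N \<omega> = pref n \<omega> @ s" "pref N \<omega> = l @ t"
      using l(2) unfolding s_def t_def N_def starts_with_def
      by (metis append_take_drop_id le_add1 le_add2 take_pref)+
    then have ws: "w @ s = \<phi> l @ t"
      using nw[of s] transport_Some[OF l(1), of t] by simp
    have "f \<omega> = conc (\<phi> l) (conc t (shift N \<omega>))"
      by (simp add: apply_starts_with l t_def N_def conc_drop_pref_shift)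
    also have "\<dots> = conc (w @ s) (shift N \<omega>)"
      by (simp add: ws conc_append)
    also have "\<dots> = conc w (shift n \<omega>)"
      by (simp add: conc_append s_def N_def conc_drop_pref_shift)
    finally show "\<eta> = f \<omega>" using \<eta> by simp
  qed
qed

end

lemma V_set_prefix_replacement:
  assumes "g \<in> V_set"
  obtains L L' \<phi> where "prefix_replacement g L L' \<phi>"
  using assms unfolding V_set_def prefix_replacement_def by blast

lemma carrier_V: "carrier V = V_set"
  by (simp add: V_def)

lemma transport_comp:
  assumes "h \<in> V_set"
  shows "transport (g \<circ> h) = transport g \<circ> transport h"
proof
  fix z
  obtain L L' \<phi> where "prefix_replacement h L L' \<phi>"
    using assms by (rule V_set_prefix_replacement)
  then have "h (encode z) \<in> range encode"
    using bij_betw_apply[OF prefix_replacement.bij_betw_eventually_zero] range_encode by blast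
  then show "transport (g \<circ> h) z = (transport g \<circ> transport h) z"
    by (simp add: transport_def f_inv_into_f)
qed

theorem lemma2p3:
  shows "\<exists>s \<in> hom V QVt. \<forall>g \<in> carrier V. pi (s g) = g"
proof (intro bexI ballI)
  fix g assume "g \<in> carrier V"
  then obtain L L' \<phi> where "prefix_replacement g L L' \<phi>"
    unfolding carrier_V by (rule V_set_prefix_replacement)
  then show "pi (transport g) = g"
    by (rule prefix_replacement.pi_transport)
next
  show "transport \<in> hom V QVt"
  proof (rule homI)
    fix g assume "g \<in> carrier V"
    then obtain L L' \<phi> where "prefix_replacement g L L' \<phi>"
      unfolding carrier_V by (rule V_set_prefix_replacement)
    then show "transport g \<in> carrier QVt"
      by (simp add: QVt_def prefix_replacement.transport_in_QVt)
  next
    fix g h assume "g \<in> carrier V" "h \<in> carrier V"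
    then show "transport (g \<otimes>\<^bsub>V\<^esub> h) = transport g \<otimes>\<^bsub>QVt\<^esub> transport h"
      by (simp add: V_def QVt_def transport_comp)
  qed
qed

end
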